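(* Let $(\mathcal A,\varphi,\mathcal F,\Phi)$ be a ncps of type B$'$ with associated infinitesimal ncps $(\mathcal B,\varphi,\varphi')$. Let $\mathcal A_1$ be a subalgebra of $\mathcal A$ containing $1_{\mathcal A}$ and $\mathcal F_1$ a subalgebra of $\mathcal F$. Then $(\mathcal A_1,\mathcal F_1)$ is cyclic-antimonotone independent in $(\mathcal A,\varphi,\mathcal F,\Phi)$ if and only if $\mathcal A_1':=\mathcal A_1\oplus\{0_{\mathcal F}\}$ and $\mathcal F_1':=\mathbb C1_{\mathcal A}\oplus\mathcal F_1$ are infinitesimally free in $(\mathcal B,\varphi,\varphi')$.
   Context: A ncps of type B$'$ is $(\mathcal A,\varphi,\mathcal F,\Phi)$ where $\mathcal A$ is a unital complex algebra, $\varphi:\mathcal A\to\mathbb C$ linear with $\varphi(1_{\mathcal A})=1$, $\mathcal F$ a complex algebra which is an $\mathcal A$-bimodule compatible with the multiplication of $\mathcal F$, and $\Phi:\mathcal F\to\mathbb C$ linear. The associated algebra is $\mathcal B=\mathcal A\oplus\mathcal F$ with product $(a_1,f_1)(a_2,f_2)=(a_1a_2,a_1f_2+f_1a_2+f_1f_2)$ and unit $1_{\mathcal A}$; the associated infinitesimal ncps is $(\mathcal B,\varphi,\varphi')$ with $\varphi(a+f):=\varphi(a)$, $\varphi'(a+f):=\Phi(f)$. $(\mathcal A_1,\mathcal F_1)$ is cyclic-antimonotone independent if $\Phi(a_0f_1a_1f_2\cdots a_{n-1}f_na_n)=\varphi(a_0a_n)\big[\prod_{i=1}^{n-1}\varphi(a_i)\big]\Phi(f_1\cdots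 f_n)$ for all $n\in\mathbb N$, $a_l\in\mathcal A_1$, $f_l\in\mathcal F_1$. In an infinitesimal ncps $(\mathcal B,\varphi,\varphi')$ ($\varphi(1)=1$, $\varphi'(1)=0$), unital subalgebras $(\mathcal B_i)_{i\in I}$ are infinitesimally free if for every $n\ge1$, $i_1,\dots,i_n\in I$ with $i_l\ne i_{l+1}$, and $b_l\in\mathcal B_{i_l}$ with $\varphi(b_l)=0$: $\varphi(b_1\cdots b_n)=0$, and $\varphi'(b_1\cdots b_n)=\varphi(b_1b_n)\varphi(b_2b_{n-1})\cdots\varphi(b_{(n-1)/2}b_{(n+3)/2})\varphi'(b_{(n+1)/2})$ if $n$ is odd and $i_1=i_n,\ i_2=i_{n-1},\dots,i_{(n-1)/2}=i_{(n+3)/2}$, while $\varphi'(b_1\cdots b_n)=0$ otherwise. *)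

theory Defs
  imports Complex_Main
begin

definition cplx_algebra :: "(complex \<Rightarrow> 'a::ring \<Rightarrow> 'a) \<Rightarrow> bool" where
  "cplx_algebra s \<longleftrightarrow> vector_space s \<and>
     (\<forall>c x y. s c (x * y) = s c x * y \<and> s c (x * y) = x * s c y)"

definition subalg :: "(complex \<Rightarrow> 'a::ring \<Rightarrow> 'a) \<Rightarrow> 'a set \<Rightarrow> bool" where
  "subalg s S \<longleftrightarrow> 0 \<in> S \<and> (\<forall>x\<in>S. \<forall>y\<in>S. x + y \<in> S \<and> x * y \<in> S) \<and> (\<forall>c. \<forall>x\<in>S. s c x \<in> S)"

definition bimodule_compat ::
  "(complex \<Rightarrow> 'a::ring_1 \<Rightarrow> 'a) \<Rightarrow> (complex \<Rightarrow> 'f::ring \<Rightarrow> 'f) \<Rightarrow>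
   ('a \<Rightarrow> 'f \<Rightarrow> 'f) \<Rightarrow> ('f \<Rightarrow> 'a \<Rightarrow> 'f) \<Rightarrow> bool" where
  "bimodule_compat sA sF la ra \<longleftrightarrow>
     (\<forall>a b f. la (a + b) f = la a f + la b f) \<and>
     (\<forall>a f g. la a (f + g) = la a f + la a g) \<and>
     (\<forall>c a f. la (sA c a) f = sF c (la a f)) \<and>
     (\<forall>c a f. la a (sF c f) = sF c (la a f)) \<and>
     (\<forall>a b f. la (a * b) f = la a (la b f)) \<and>
     (\<forall>f. la 1 f = f) \<and>
     (\<forall>a b f. ra f (a + b) = ra f a + ra f b) \<and>
     (\<forall>a f g. ra (f + g) a = ra f a + ra g a) \<and>
     (\<forall>c a f. ra f (sA c a) = sF c (ra f a)) \<and>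
     (\<forall>c a f. ra (sF c f) a = sF c (ra f a)) \<and>
     (\<forall>a b f. ra f (a * b) = ra (ra f a) b) \<and>
     (\<forall>f. ra f 1 = f) \<and>
     (\<forall>a b f. ra (la a f) b = la a (ra f b)) \<and>
     (\<forall>a f g. la a (f * g) = la a f * g) \<and>
     (\<forall>a f g. ra (f * g) a = f * ra g a) \<and>
     (\<forall>a f g. ra f a * g = f * la a g)"

definition ncps_typeB' ::
  "(complex \<Rightarrow> 'a::ring_1 \<Rightarrow> 'a) \<Rightarrow> ('a \<Rightarrow> complex) \<Rightarrow>
   (complex \<Rightarrow> 'f::ring \<Rightarrow> 'f) \<Rightarrow> ('a \<Rightarrow> 'f \<Rightarrow> 'f) \<Rightarrow> ('f \<Rightarrow> 'a \<Rightarrow> 'f) \<Rightarrow>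
   ('f \<Rightarrow> complex) \<Rightarrow> bool" where
  "ncps_typeB' sA \<phi> sF la ra \<Phi> \<longleftrightarrow>
     cplx_algebra sA \<and> cplx_algebra sF \<and> bimodule_compat sA sF la ra \<and>
     Vector_Spaces.linear sA (*) \<phi> \<and> \<phi> 1 = 1 \<and> Vector_Spaces.linear sF (*) \<Phi>"

text \<open>Elements of B are pairs (a, f) standing for a + f.\<close>
definition Bmult :: "('a::ring_1 \<Rightarrow> 'f::ring \<Rightarrow> 'f) \<Rightarrow> ('f \<Rightarrow> 'a \<Rightarrow> 'f) \<Rightarrow>
    'a \<times> 'f \<Rightarrow> 'a \<times> 'f \<Rightarrow> 'a \<times> 'f" where
  "Bmult la ra x y = (fst x * fst y, la (fst x) (snd y) + ra (snd x) (fst y) + snd x * snd y)"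

definition Bone :: "'a::ring_1 \<times> 'f::ring" where
  "Bone = (1, 0)"

definition Bprod :: "('a::ring_1 \<Rightarrow> 'f::ring \<Rightarrow> 'f) \<Rightarrow> ('f \<Rightarrow> 'a \<Rightarrow> 'f) \<Rightarrow>
    ('a \<times> 'f) list \<Rightarrow> 'a \<times> 'f" where
  "Bprod la ra bs = foldr (Bmult la ra) bs Bone"

definition Bphi :: "('a \<Rightarrow> complex) \<Rightarrow> 'a \<times> 'f \<Rightarrow> complex" where
  "Bphi \<phi> x = \<phi> (fst x)"

definition Bphi' :: "('f \<Rightarrow> complex) \<Rightarrow> 'a \<times> 'f \<Rightarrow> complex" where
  "Bphi' \<Phi> x = \<Phi> (snd x)"

text \<open>Product f_1 ... f_n in the (possibly non-unital) algebra F, for n \<ge> 1.\<close>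
fun Fprod :: "'f::ring list \<Rightarrow> 'f" where
  "Fprod [] = 0"
| "Fprod [x] = x"
| "Fprod (x # y # xs) = x * Fprod (y # xs)"

text \<open>The element a_0 f_1 a_1 f_2 ... a_(n-1) f_n a_n, computed in B (it lies in F).\<close>
definition mixed_word :: "('a::ring_1 \<Rightarrow> 'f::ring \<Rightarrow> 'f) \<Rightarrow> ('f \<Rightarrow> 'a \<Rightarrow> 'f) \<Rightarrow>
    nat \<Rightarrow> (nat \<Rightarrow> 'a) \<Rightarrow> (nat \<Rightarrow> 'f) \<Rightarrow> 'f" where
  "mixed_word la ra n a f =
     snd (Bprod la ra ((a 0, 0) # concat (map (\<lambda>l. [(0, f l), (a l, 0)]) [1..<n+1])))"

definition cyclic_antimonotone_indep ::
  "('a::ring_1 \<Rightarrow> complex) \<Rightarrow> ('a \<Rightarrow> 'f::ring \<Rightarrow> 'f) \<Rightarrow> ('f \<Rightarrow> 'a \<Rightarrow> 'f) \<Rightarrow>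
   ('f \<Rightarrow> complex) \<Rightarrow> 'a set \<Rightarrow> 'f set \<Rightarrow> bool" where
  "cyclic_antimonotone_indep \<phi> la ra \<Phi> A1 F1 \<longleftrightarrow>
     (\<forall>n::nat. \<forall>a f. n \<ge> 1 \<longrightarrow> (\<forall>l\<le>n. a l \<in> A1) \<longrightarrow> (\<forall>l\<in>{1..n}. f l \<in> F1) \<longrightarrow>
        \<Phi> (mixed_word la ra n a f) =
          \<phi> (a 0 * a n) * (\<Prod>i\<in>{1..n-1}. \<phi> (a i)) * \<Phi> (Fprod (map f [1..<n+1])))"

definition inf_free ::
  "('b list \<Rightarrow> 'b) \<Rightarrow> ('b \<Rightarrow> complex) \<Rightarrow> ('b \<Rightarrow> complex) \<Rightarrow> 'i set \<Rightarrow> ('i \<Rightarrow> 'b set) \<Rightarrow> bool" where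
  "inf_free bprod ph ph' I Bs \<longleftrightarrow>
     (\<forall>n::nat. \<forall>(idx::nat \<Rightarrow> 'i) (b::nat \<Rightarrow> 'b).
        n \<ge> 1 \<longrightarrow> (\<forall>l\<in>{1..n}. idx l \<in> I) \<longrightarrow>
        (\<forall>l\<in>{1..<n}. idx l \<noteq> idx (l + 1)) \<longrightarrow>
        (\<forall>l\<in>{1..n}. b l \<in> Bs (idx l) \<and> ph (b l) = 0) \<longrightarrow>
          ph (bprod (map b [1..<n+1])) = 0 \<and>
          ph' (bprod (map b [1..<n+1])) =
            (if odd n \<and> (\<forall>l\<in>{1..(n-1) div 2}. idx l = idx (n + 1 - l))
             then (\<Prod>l\<in>{1..(n-1) div 2}. ph (bprod [b l, b (n + 1 - l)])) * ph' (b ((n+1) div 2))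
             else 0))"

end

theory Submission
  imports Defs
begin

text \<open>
  The centered elements of A1' are the letters (a, 0) with phi a = 0, those of F1' are the letters
  (0, f), and phi vanishes on every product containing an F-letter. So infinitesimal freeness only
  constrains Phi on alternating centered words: Phi f on the word f, phi (a a') Phi f on the word
  a f a', and 0 on all others. Both this and cyclic-antimonotone independence are conditions on
  Phi (a0 f1 a1 ... fn an), which is linear in every a_i. Writing a_i = phi a_i 1 + (a_i - phi a_i 1),
  where a unit between f_i and f_(i+1) merges them, an induction on the length and on the number of
  non-centered inner letters reduces both conditions to words whose inner letters are centered and
  whose end letters are 1 or centered. Deleting the unit ends turns these into exactly the alternating
  centered words, and there the two prescriptions agree.
\<close>

lemma in_set_butlast_split:
  assumes "x \<in> set (butlast xs)"
  shows "\<exists>ys y zs. xs = ys @ x # y # zs"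
proof -
  obtain ys zs where "butlast xs = ys @ x # zs"
    using assms by (meson split_list)
  moreover have "xs = butlast xs @ [last xs]"
    using assms by (cases xs rule: rev_cases) auto
  ultimately have "xs = ys @ x # (zs @ [last xs])"
    by simp
  then show ?thesis
    by (cases zs) auto
qed

lemma Fprod_Cons: "xs \<noteq> [] \<Longrightarrow> Fprod (x # xs) = x * Fprod xs"
  by (cases xs) auto

lemma Fprod_merge: "Fprod (xs @ f # g # ys) = Fprod (xs @ (f * g) # ys)"
  by (induction xs) (auto simp: Fprod_Cons mult.assoc intro: Fprod.cases[of ys])

text \<open>Elements of B are pairs (A-part, F-part); a pair (f, a) encodes the two letters f a of a
  word a0 f1 a1 ... fn an.\<close>

fun pair_letters :: "('f \<times> 'a) list \<Rightarrow> ('a::zero \<times> 'f::zero) list" where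
  "pair_letters [] = []"
| "pair_letters ((f, a) # ps) = (0, f) # (a, 0) # pair_letters ps"

lemma pair_letters_append: "pair_letters (xs @ ys) = pair_letters xs @ pair_letters ys"
  by (induction xs rule: pair_letters.induct) auto

lemma even_mirror_index:
  assumes "odd (n :: nat)" "l \<in> {1..(n - 1) div 2}"
  shows "even (l - 1) \<longleftrightarrow> even (n + 1 - l - 1)"
proof -
  obtain m where "n = 2 * m + 1"
    using assms(1) by (rule oddE)
  then have "n + 1 - l - 1 = 2 * (m - l) + (l - 1) + 2"
    using assms(2) by auto
  then show ?thesis
    by simp
qed

lemma alternating_index_parity:
  fixes idx :: "nat \<Rightarrow> bool"
  assumes idx_alt: "\<forall>l\<in>{1..<n}. idx l \<noteq> idx (l + 1)" and l: "l \<in> {1..n}"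
  shows "idx l = (even (l - 1) = idx 1)"
proof -
  have "1 \<le> l" "l \<le> n"
    using l by auto
  then show ?thesis
  proof (induction l rule: dec_induct)
    case (step m)
    then have "idx m \<noteq> idx (m + 1)"
      using idx_alt by simp
    moreover have "even m \<longleftrightarrow> \<not> even (m - 1)"
      using step.hyps(1) by (cases m) auto
    ultimately have "idx (m + 1) = (even m = idx 1)"
      using step.IH[OF Suc_leD[OF step.prems]] by metis
    then show ?case
      by simp
  qed simp
qed

definition inf_free_rhs ::
  "('b list \<Rightarrow> 'b) \<Rightarrow> ('b \<Rightarrow> complex) \<Rightarrow> ('b \<Rightarrow> complex) \<Rightarrow> nat \<Rightarrow> (nat \<Rightarrow> 'i) \<Rightarrow>
    (nat \<Rightarrow> 'b) \<Rightarrow> complex" where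
  "inf_free_rhs bprod ph ph' n idx b =
    (if odd n \<and> (\<forall>l\<in>{1..(n - 1) div 2}. idx l = idx (n + 1 - l))
     then (\<Prod>l\<in>{1..(n - 1) div 2}. ph (bprod [b l, b (n + 1 - l)])) * ph' (b ((n + 1) div 2))
     else 0)"

lemma inf_free_iff_rhs:
  "inf_free bprod ph ph' I Bs \<longleftrightarrow>
    (\<forall>n idx b. n \<ge> 1 \<longrightarrow> (\<forall>l\<in>{1..n}. idx l \<in> I) \<longrightarrow> (\<forall>l\<in>{1..<n}. idx l \<noteq> idx (l + 1)) \<longrightarrow>
      (\<forall>l\<in>{1..n}. b l \<in> Bs (idx l) \<and> ph (b l) = 0) \<longrightarrow>
        ph (bprod (map b [1..<n + 1])) = 0 \<and>
        ph' (bprod (map b [1..<n + 1])) = inf_free_rhs bprod ph ph' n idx b)"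
  by (simp add: inf_free_def inf_free_rhs_def)

locale ncps_B' =
  fixes sA :: "complex \<Rightarrow> 'a::ring_1 \<Rightarrow> 'a"
    and \<phi> :: "'a \<Rightarrow> complex"
    and sF :: "complex \<Rightarrow> 'f::ring \<Rightarrow> 'f"
    and la :: "'a \<Rightarrow> 'f \<Rightarrow> 'f"
    and ra :: "'f \<Rightarrow> 'a \<Rightarrow> 'f"
    and \<Phi> :: "'f \<Rightarrow> complex"
  assumes ncps: "ncps_typeB' sA \<phi> sF la ra \<Phi>"
begin

lemma
  la_add_left: "la (a + b) f = la a f + la b f" and
  la_add_right: "la a (f + g) = la a f + la a g" and
  la_scale_left: "la (sA c a) f = sF c (la a f)" and
  la_scale_right: "la a (sF c f) = sF c (la a f)" and
  la_mult: "la (a * b) f = la a (la b f)" and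
  la_one [simp]: "la 1 f = f" and
  ra_add_left: "ra (f + g) a = ra f a + ra g a" and
  ra_add_right: "ra f (a + b) = ra f a + ra f b" and
  ra_scale_right: "ra f (sA c a) = sF c (ra f a)" and
  ra_mult: "ra f (a * b) = ra (ra f a) b" and
  ra_one [simp]: "ra f 1 = f" and
  ra_la: "ra (la a f) b = la a (ra f b)" and
  la_mult_F: "la a (f * g) = la a f * g" and
  ra_mult_F: "ra (f * g) a = f * ra g a" and
  ra_mult_la: "ra f a * g = f * la a g"
  using ncps by (simp_all add: ncps_typeB'_def bimodule_compat_def)

lemma la_zero [simp]: "la 0 f = 0" "la a 0 = 0"
  using la_add_left[of 0 0 f] la_add_right[of a 0 0] by simp_all

lemma ra_zero [simp]: "ra f 0 = 0" "ra 0 a = 0"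
  using ra_add_right[of f 0 0] ra_add_left[of 0 0 a] by simp_all

lemma module_A: "module sA" and module_F: "module sF"
  using ncps by (simp_all add: ncps_typeB'_def cplx_algebra_def module_iff_vector_space)

lemma scale_mult_A: "sA c (x * y) = sA c x * y" "sA c (x * y) = x * sA c y"
  and scale_mult_F: "sF c (f * g) = f * sF c g"
  using ncps unfolding ncps_typeB'_def cplx_algebra_def by blast+

lemma phi_linear: "\<phi> (sA c x + y) = c * \<phi> x + \<phi> y"
  and Phi_linear: "\<Phi> (sF c f + g) = c * \<Phi> f + \<Phi> g"
  using ncps by (simp_all add: ncps_typeB'_def Vector_Spaces.linear_iff)

lemma phi_one [simp]: "\<phi> 1 = 1"
  using ncps by (simp add: ncps_typeB'_def)

lemma scale_zero_A [simp]: "sA 0 x = 0"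
  using module.scale_zero_left[OF module_A] .

lemma phi_zero [simp]: "\<phi> 0 = 0"
  using phi_linear[of 1 0 0] module.scale_one[OF module_A] by simp

lemma phi_scale: "\<phi> (sA c x) = c * \<phi> x"
  using phi_linear[of c x 0] by simp

abbreviation B_times (infixl "\<cdot>" 70) where "x \<cdot> y \<equiv> Bmult la ra x y"

lemma Bmult_assoc: "(x \<cdot> y) \<cdot> z = x \<cdot> (y \<cdot> z)"
  by (simp add: Bmult_def la_add_right ra_add_left distrib_left distrib_right la_mult ra_mult
      ra_la la_mult_F ra_mult_F ra_mult_la mult.assoc add_ac)

lemma Bone_Bmult [simp]: "Bone \<cdot> x = x" and Bmult_Bone [simp]: "x \<cdot> Bone = x"
  by (simp_all add: Bmult_def Bone_def)

lemma Bphi_Bmult: "Bphi \<phi> (x \<cdot> y) = \<phi> (fst x * fst y)"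
  by (simp add: Bphi_def Bmult_def)

lemma Bprod_Nil [simp]: "Bprod la ra [] = Bone"
  and Bprod_Cons [simp]: "Bprod la ra (x # xs) = x \<cdot> Bprod la ra xs"
  by (simp_all add: Bprod_def)

lemma Bprod_append: "Bprod la ra (xs @ ys) = Bprod la ra xs \<cdot> Bprod la ra ys"
  by (induction xs) (auto simp: Bmult_assoc)

definition center :: "'a \<Rightarrow> 'a" where
  "center a = a - sA (\<phi> a) 1"

lemma center_decomp: "sA (\<phi> a) 1 + center a = a"
  by (simp add: center_def)

lemma phi_center [simp]: "\<phi> (center a) = 0"
  using phi_linear[of "\<phi> a" 1 "center a"] center_decomp[of a] by simp

lemma snd_Bmult_letter_linear:
  "snd (X \<cdot> ((sA k 1 + c, 0) \<cdot> Y)) = sF k (snd (X \<cdot> Y)) + snd (X \<cdot> ((c, 0) \<cdot> Y))"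
proof -
  obtain x1 x2 y1 y2 where X: "X = (x1, x2)" and Y: "Y = (y1, y2)" by fastforce
  have "la x1 (sF k y2) = sF k (la x1 y2)" "ra x2 (sA k y1) = sF k (ra x2 y1)"
    "x2 * sF k y2 = sF k (x2 * y2)"
    by (simp_all add: la_scale_right ra_scale_right scale_mult_F)
  then show ?thesis
    unfolding X Y Bmult_def
    by (simp add: distrib_left distrib_right la_add_left la_add_right la_scale_left ra_add_right
        scale_mult_A(1)[symmetric] module.scale_right_distrib[OF module_F] add_ac)
qed

lemma Phi_Bprod_split_letter:
  "\<Phi> (snd (Bprod la ra (xs @ (a, 0) # ys))) =
     \<phi> a * \<Phi> (snd (Bprod la ra (xs @ ys))) + \<Phi> (snd (Bprod la ra (xs @ (center a, 0) # ys)))"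
  using snd_Bmult_letter_linear[of "Bprod la ra xs" "\<phi> a" "center a" "Bprod la ra ys"]
  by (simp add: Bprod_append center_decomp Phi_linear)

lemma Bprod_removeAll_Bone: "Bprod la ra (removeAll Bone xs) = Bprod la ra xs"
  by (induction xs) auto

definition mixed_moment :: "'a \<Rightarrow> ('f \<times> 'a) list \<Rightarrow> complex" where
  "mixed_moment a0 ps = \<Phi> (snd (Bprod la ra ((a0, 0) # pair_letters ps)))"

definition cyclic_value :: "'a \<Rightarrow> ('f \<times> 'a) list \<Rightarrow> complex" where
  "cyclic_value a0 ps =
    \<phi> (a0 * snd (last ps)) * (\<Prod>p\<leftarrow>butlast ps. \<phi> (snd p)) * \<Phi> (Fprod (map fst ps))"

lemma mixed_word_eq_mixed_moment:
  "\<Phi> (mixed_word la ra n a f) = mixed_moment (a 0) (map (\<lambda>l. (f l, a l)) [1..<n + 1])"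
proof -
  have "concat (map (\<lambda>l. [(0, f l), (a l, 0)]) xs) = pair_letters (map (\<lambda>l. (f l, a l)) xs)" for xs
    by (induction xs) auto
  then show ?thesis
    by (simp add: mixed_word_def mixed_moment_def del: upt_Suc)
qed

lemma cyclic_value_indexed:
  assumes "n \<ge> 1"
  shows "\<phi> (a 0 * a n) * (\<Prod>i\<in>{1..n - 1}. \<phi> (a i)) * \<Phi> (Fprod (map f [1..<n + 1])) =
    cyclic_value (a 0) (map (\<lambda>l. (f l, a l)) [1..<n + 1])"
proof -
  have split: "[1..<n + 1] = [1..<n] @ [n]" and "{1..n - 1} = set [1..<n]"
    using assms by auto
  then have "(\<Prod>i\<in>{1..n - 1}. \<phi> (a i)) = (\<Prod>i\<leftarrow>[1..<n]. \<phi> (a i))"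
    by (simp only: prod.distinct_set_conv_list distinct_upt)
  then show ?thesis
    unfolding cyclic_value_def split by (simp add: comp_def)
qed

lemma cyclic_antimonotone_indep_iff_moments:
  "cyclic_antimonotone_indep \<phi> la ra \<Phi> A1 F1 \<longleftrightarrow>
    (\<forall>a0 ps. a0 \<in> A1 \<longrightarrow> ps \<noteq> [] \<longrightarrow> set ps \<subseteq> F1 \<times> A1 \<longrightarrow> mixed_moment a0 ps = cyclic_value a0 ps)"
proof
  assume indep: "cyclic_antimonotone_indep \<phi> la ra \<Phi> A1 F1"
  show "\<forall>a0 ps. a0 \<in> A1 \<longrightarrow> ps \<noteq> [] \<longrightarrow> set ps \<subseteq> F1 \<times> A1 \<longrightarrow> mixed_moment a0 ps = cyclic_value a0 ps"
  proof (intro allI impI)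
    fix a0 ps
    assume a0: "a0 \<in> A1" and ne: "ps \<noteq> []" and ps: "set ps \<subseteq> F1 \<times> A1"
    define n where "n = length ps"
    define a where "a i = (if i = 0 then a0 else snd (ps ! (i - 1)))" for i
    define f where "f i = fst (ps ! (i - 1))" for i
    have n: "n \<ge> 1"
      using ne by (simp add: n_def Suc_le_eq)
    have ps_eq: "map (\<lambda>l. (f l, a l)) [1..<n + 1] = ps"
      by (rule nth_equalityI) (simp_all del: upt_Suc add: nth_upt n_def a_def f_def)
    have "ps ! (l - 1) \<in> F1 \<times> A1" if "l \<in> {1..n}" for l
      using that ps nth_mem[of "l - 1" ps] by (auto simp: n_def)
    then have "\<forall>l\<le>n. a l \<in> A1" "\<forall>l\<in>{1..n}. f l \<in> F1"
      using a0 by (auto simp: a_def f_def mem_Times_iff)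
    then show "mixed_moment a0 ps = cyclic_value a0 ps"
      using indep n mixed_word_eq_mixed_moment[of n a f] cyclic_value_indexed[OF n, of a f]
      unfolding cyclic_antimonotone_indep_def ps_eq by (simp add: a_def)
  qed
next
  assume moments: "\<forall>a0 ps. a0 \<in> A1 \<longrightarrow> ps \<noteq> [] \<longrightarrow> set ps \<subseteq> F1 \<times> A1 \<longrightarrow>
    mixed_moment a0 ps = cyclic_value a0 ps"
  show "cyclic_antimonotone_indep \<phi> la ra \<Phi> A1 F1"
    unfolding cyclic_antimonotone_indep_def
  proof (intro allI impI)
    fix n :: nat and a f
    assume n: "n \<ge> 1" and "\<forall>l\<le>n. a l \<in> A1" and "\<forall>l\<in>{1..n}. f l \<in> F1"
    then have "a 0 \<in> A1" "set (map (\<lambda>l. (f l, a l)) [1..<n + 1]) \<subseteq> F1 \<times> A1"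
      by auto
    then show "\<Phi> (mixed_word la ra n a f) =
      \<phi> (a 0 * a n) * (\<Prod>i\<in>{1..n - 1}. \<phi> (a i)) * \<Phi> (Fprod (map f [1..<n + 1]))"
      using moments n unfolding mixed_word_eq_mixed_moment cyclic_value_indexed[OF n]
      by (simp del: upt_Suc)
  qed
qed

definition multilinear_mixed :: "('a \<Rightarrow> ('f \<times> 'a) list \<Rightarrow> complex) \<Rightarrow> bool" where
  "multilinear_mixed G \<longleftrightarrow>
    (\<forall>a0 ps. G a0 ps = \<phi> a0 * G 1 ps + G (center a0) ps) \<and>
    (\<forall>a0 xs f a ys. G a0 (xs @ (f, a) # ys) =
      \<phi> a * G a0 (xs @ (f, 1) # ys) + G a0 (xs @ (f, center a) # ys)) \<and>
    (\<forall>a0 xs f g a ys. G a0 (xs @ (f, 1) # (g, a) # ys) = G a0 (xs @ (f * g, a) # ys))"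

lemma
  assumes "multilinear_mixed G"
  shows multilinear_mixed_split_first: "G a0 ps = \<phi> a0 * G 1 ps + G (center a0) ps"
    and multilinear_mixed_split:
      "G a0 (xs @ (f, a) # ys) = \<phi> a * G a0 (xs @ (f, 1) # ys) + G a0 (xs @ (f, center a) # ys)"
    and multilinear_mixed_merge: "G a0 (xs @ (f, 1) # (g, a) # ys) = G a0 (xs @ (f * g, a) # ys)"
  using assms unfolding multilinear_mixed_def by blast+

lemma multilinear_mixed_moment: "multilinear_mixed mixed_moment"
  unfolding multilinear_mixed_def
proof (intro conjI allI)
  fix a0 ps
  show "mixed_moment a0 ps = \<phi> a0 * mixed_moment 1 ps + mixed_moment (center a0) ps"
    using Phi_Bprod_split_letter[of "[]" a0] by (simp add: mixed_moment_def flip: Bone_def)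
next
  fix a0 xs f a ys
  show "mixed_moment a0 (xs @ (f, a) # ys) =
    \<phi> a * mixed_moment a0 (xs @ (f, 1) # ys) + mixed_moment a0 (xs @ (f, center a) # ys)"
    using Phi_Bprod_split_letter[of "(a0, 0) # pair_letters xs @ [(0, f)]" a "pair_letters ys"]
    by (simp add: mixed_moment_def pair_letters_append Bprod_append flip: Bone_def)
next
  fix a0 xs f g a ys
  have "(0, f) \<cdot> (Bone \<cdot> ((0, g) \<cdot> x)) = (0, f * g) \<cdot> x" for x
    by (simp add: Bmult_def Bone_def ra_mult_F distrib_left mult.assoc)
  then show "mixed_moment a0 (xs @ (f, 1) # (g, a) # ys) = mixed_moment a0 (xs @ (f * g, a) # ys)"
    by (simp add: mixed_moment_def pair_letters_append Bprod_append flip: Bone_def)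
qed

lemma phi_mult_split_left: "\<phi> (a * x) = \<phi> a * \<phi> x + \<phi> (center a * x)"
proof -
  have "a * x = sA (\<phi> a) x + center a * x"
    by (metis center_decomp distrib_right mult_1 scale_mult_A(1))
  then show ?thesis
    by (simp add: phi_linear)
qed

lemma phi_mult_split_right: "\<phi> (x * a) = \<phi> a * \<phi> x + \<phi> (x * center a)"
proof -
  have "x * a = sA (\<phi> a) x + x * center a"
    by (metis center_decomp distrib_left mult_1_right scale_mult_A(2))
  then show ?thesis
    by (simp add: phi_linear)
qed

lemma multilinear_mixed_cyclic_value: "multilinear_mixed cyclic_value"
  unfolding multilinear_mixed_def
proof (intro conjI allI)
  fix a0 ps
  define R where "R = (\<Prod>p\<leftarrow>butlast ps. \<phi> (snd p)) * \<Phi> (Fprod (map fst ps))"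
  have "cyclic_value b ps = \<phi> (b * snd (last ps)) * R" for b
    by (simp add: cyclic_value_def R_def mult.assoc)
  then show "cyclic_value a0 ps = \<phi> a0 * cyclic_value 1 ps + cyclic_value (center a0) ps"
    using phi_mult_split_left[of a0 "snd (last ps)"] by (simp add: distrib_right)
next
  fix a0 xs f a ys
  show "cyclic_value a0 (xs @ (f, a) # ys) =
    \<phi> a * cyclic_value a0 (xs @ (f, 1) # ys) + cyclic_value a0 (xs @ (f, center a) # ys)"
  proof (cases "ys = []")
    case True
    define R where "R = (\<Prod>p\<leftarrow>xs. \<phi> (snd p)) * \<Phi> (Fprod (map fst xs @ [f]))"
    have "cyclic_value a0 (xs @ [(f, b)]) = \<phi> (a0 * b) * R" for b
      by (simp add: cyclic_value_def R_def mult.assoc)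
    then show ?thesis
      using True phi_mult_split_right[of a0 a] by (simp add: distrib_right)
  next
    case False
    define R where "R = \<phi> (a0 * snd (last ys)) * (\<Prod>p\<leftarrow>xs. \<phi> (snd p)) *
      (\<Prod>p\<leftarrow>butlast ys. \<phi> (snd p)) * \<Phi> (Fprod (map fst xs @ f # map fst ys))"
    have "cyclic_value a0 (xs @ (f, b) # ys) = \<phi> b * R" for b
      using False by (simp add: cyclic_value_def R_def butlast_append)
    then show ?thesis
      by simp
  qed
next
  fix a0 xs f g a ys
  show "cyclic_value a0 (xs @ (f, 1) # (g, a) # ys) = cyclic_value a0 (xs @ (f * g, a) # ys)"
    using Fprod_merge[of "map fst xs" f g "map fst ys"]
    by (cases ys rule: rev_cases) (simp_all add: cyclic_value_def butlast_append)
qed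

end

locale ncps_B'_subalgebras = ncps_B' sA \<phi> sF la ra \<Phi>
  for sA :: "complex \<Rightarrow> 'a::ring_1 \<Rightarrow> 'a" and \<phi> and sF :: "complex \<Rightarrow> 'f::ring \<Rightarrow> 'f"
    and la ra \<Phi> +
  fixes A1 :: "'a set" and F1 :: "'f set"
  assumes subalg_A1: "subalg sA A1" and one_A1: "1 \<in> A1"
    and subalg_F1: "subalg sF F1"
begin

lemma F1_mult: "f \<in> F1 \<Longrightarrow> g \<in> F1 \<Longrightarrow> f * g \<in> F1"
  using subalg_F1 by (simp add: subalg_def)

lemma center_in_A1: "a \<in> A1 \<Longrightarrow> center a \<in> A1"
proof -
  assume "a \<in> A1"
  have "center a = a + sA (- \<phi> a) 1"
    by (simp add: center_def module.scale_minus_left[OF module_A])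
  then show ?thesis
    using \<open>a \<in> A1\<close> one_A1 subalg_A1 by (simp add: subalg_def)
qed

definition embedded :: "bool \<Rightarrow> ('a \<times> 'f) set" where
  "embedded = (\<lambda>i. if i then {(a, 0) | a. a \<in> A1} else {(sA c 1, f) | c f. f \<in> F1})"

fun centered_letter :: "bool \<Rightarrow> 'a \<times> 'f \<Rightarrow> bool" where
  "centered_letter True x \<longleftrightarrow> (\<exists>a\<in>A1. \<phi> a = 0 \<and> x = (a, 0))"
| "centered_letter False x \<longleftrightarrow> (\<exists>f\<in>F1. x = (0, f))"

lemma centered_letter_iff: "centered_letter i x \<longleftrightarrow> x \<in> embedded i \<and> Bphi \<phi> x = 0"
  by (cases i) (auto simp: embedded_def Bphi_def phi_scale intro: exI[of _ 0])

fun alternating :: "bool \<Rightarrow> ('a \<times> 'f) list \<Rightarrow> bool" where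
  "alternating s [] = True"
| "alternating s (x # W) \<longleftrightarrow> centered_letter s x \<and> alternating (\<not> s) W"

lemma alternating_iff_nth: "alternating s W \<longleftrightarrow> (\<forall>k<length W. centered_letter (even k = s) (W ! k))"
proof (induction W arbitrary: s)
  case (Cons x W)
  have "(even (Suc k) = s) = (even k = (\<not> s))" for k by auto
  then show ?case by (simp add: Cons.IH All_less_Suc2)
qed simp

lemma phi_Bprod_alternating:
  assumes "alternating s W" "W \<noteq> []"
  shows "\<phi> (fst (Bprod la ra W)) = 0"
  using assms by (cases s; cases W rule: remdups_adj.cases) (auto simp: Bmult_def Bone_def)

lemma alternating_first_F_letter:
  "alternating s W \<Longrightarrow> length W \<ge> 2 \<Longrightarrow> fst (W ! (if s then 1 else 0)) = 0"
  by (cases s; cases W rule: remdups_adj.cases) auto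

fun alternating_value :: "('a \<times> 'f) list \<Rightarrow> complex" where
  "alternating_value [x] = \<Phi> (snd x)"
| "alternating_value [x, y, z] = \<phi> (fst x * fst z) * \<Phi> (snd y)"
| "alternating_value _ = 0"

lemma alternating_value_eq_0: "length W \<noteq> 1 \<Longrightarrow> length W \<noteq> 3 \<Longrightarrow> alternating_value W = 0"
  by (cases W rule: alternating_value.cases) auto

lemma inf_free_rhs_alternating:
  assumes alt: "alternating s W" and ne: "W \<noteq> []"
    and idx: "\<forall>l\<in>{1..length W}. idx l = (even (l - 1) = s)"
    and b: "\<forall>l\<in>{1..length W}. b l = W ! (l - 1)"
  defines "n \<equiv> length W"
  shows "inf_free_rhs (Bprod la ra) (Bphi \<phi>) (Bphi' \<Phi>) n idx b = alternating_value W"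
proof (cases "odd n")
  case False
  then have "length W \<noteq> 1" "length W \<noteq> 3"
    by (auto simp: n_def)
  then show ?thesis
    using False by (simp add: inf_free_rhs_def alternating_value_eq_0)
next
  case odd: True
  have palindrome: "idx l = idx (n + 1 - l)" if l: "l \<in> {1..(n - 1) div 2}" for l
  proof -
    have "l \<in> {1..length W}" "n + 1 - l \<in> {1..length W}"
      using l by (auto simp: n_def)
    then have "idx l = (even (l - 1) = s)" "idx (n + 1 - l) = (even (n + 1 - l - 1) = s)"
      using idx by blast+
    then show ?thesis
      using even_mirror_index[OF odd l] by simp
  qed
  then have lhs: "inf_free_rhs (Bprod la ra) (Bphi \<phi>) (Bphi' \<Phi>) n idx b =
      (\<Prod>l\<in>{1..(n - 1) div 2}. Bphi \<phi> (Bprod la ra [b l, b (n + 1 - l)])) * Bphi' \<Phi> (b ((n + 1) div 2))"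
    using odd by (simp add: inf_free_rhs_def)
  have "n = 1 \<or> n = 3 \<or> n \<ge> 5"
    using odd by presburger
  then consider "n = 1" | "n = 3" | "n \<ge> 5"
    by blast
  then show ?thesis
  proof cases
    case 1
    then obtain x where "W = [x]"
      by (auto simp: n_def length_Suc_conv)
    then show ?thesis
      unfolding lhs using 1 b by (simp add: Bphi'_def)
  next
    case 2
    then obtain x y z where "W = [x, y, z]"
      by (auto simp: n_def numeral_3_eq_3 length_Suc_conv)
    moreover have "{1..(n - 1) div 2} = {1}"
      using 2 by auto
    ultimately show ?thesis
      unfolding lhs using 2 b by (simp add: Bphi_Bmult Bphi'_def)
  next
    case 3
    define l0 :: nat where "l0 = (if s then 2 else 1)"
    have l0: "l0 \<in> {1..(n - 1) div 2}" "l0 \<le> n"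
      using 3 by (auto simp: l0_def)
    have "fst (W ! (if s then 1 else 0)) = 0"
      using alternating_first_F_letter[OF alt] 3 by (simp add: n_def)
    then have "fst (W ! (l0 - 1)) = 0"
      by (cases s) (simp_all add: l0_def)
    then have "Bphi \<phi> (Bprod la ra [b l0, b (n + 1 - l0)]) = 0"
      using b l0 by (auto simp: Bphi_Bmult n_def)
    then have "(\<Prod>l\<in>{1..(n - 1) div 2}. Bphi \<phi> (Bprod la ra [b l, b (n + 1 - l)])) = 0"
      using l0(1) by (intro prod_zero) auto
    then show ?thesis
      unfolding lhs using 3 by (simp add: n_def alternating_value_eq_0)
  qed
qed

lemma map_nth_shift: "map (\<lambda>l. W ! (l - 1)) [1..<length W + 1] = W"
  by (rule nth_equalityI) (simp_all del: upt_Suc add: nth_upt)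

lemma alternating_moment_if_inf_free:
  assumes free: "inf_free (Bprod la ra) (Bphi \<phi>) (Bphi' \<Phi>) UNIV embedded"
    and alt: "alternating s W" and ne: "W \<noteq> []"
  shows "\<Phi> (snd (Bprod la ra W)) = alternating_value W"
proof -
  define idx where "idx l = (even (l - 1) = s)" for l :: nat
  define b where "b = (\<lambda>l. W ! (l - 1))"
  have letter: "b l \<in> embedded (idx l) \<and> Bphi \<phi> (b l) = 0" if l: "l \<in> {1..length W}" for l
  proof -
    obtain k where "l = Suc k" "k < length W"
      using l by (cases l) auto
    then show ?thesis
      using alt by (simp add: alternating_iff_nth idx_def b_def flip: centered_letter_iff)
  qed
  have "idx l \<noteq> idx (l + 1)" if "l \<in> {1..<length W}" for l
    using that by (auto simp: idx_def)
  moreover have "length W \<ge> 1"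
    using ne by (simp add: Suc_le_eq)
  ultimately have "Bphi' \<Phi> (Bprod la ra (map b [1..<length W + 1])) =
      inf_free_rhs (Bprod la ra) (Bphi \<phi>) (Bphi' \<Phi>) (length W) idx b"
    using free letter unfolding inf_free_iff_rhs by blast
  also have "\<dots> = alternating_value W"
    by (rule inf_free_rhs_alternating[OF alt ne]) (simp_all add: idx_def b_def)
  finally show ?thesis
    unfolding b_def map_nth_shift by (simp add: Bphi'_def)
qed

lemma inf_free_if_alternating_moments:
  assumes moments: "\<And>s W. alternating s W \<Longrightarrow> W \<noteq> [] \<Longrightarrow> \<Phi> (snd (Bprod la ra W)) = alternating_value W"
  shows "inf_free (Bprod la ra) (Bphi \<phi>) (Bphi' \<Phi>) UNIV embedded"
  unfolding inf_free_iff_rhs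
proof (intro allI impI)
  fix n :: nat and idx :: "nat \<Rightarrow> bool" and b
  assume n: "n \<ge> 1" and "\<forall>l\<in>{1..n}. idx l \<in> UNIV"
    and idx_alt: "\<forall>l\<in>{1..<n}. idx l \<noteq> idx (l + 1)"
    and b: "\<forall>l\<in>{1..n}. b l \<in> embedded (idx l) \<and> Bphi \<phi> (b l) = 0"
  define W where "W = map b [1..<n + 1]"
  have len: "length W = n" and ne: "W \<noteq> []"
    using n by (auto simp: W_def)
  have W_nth: "W ! k = b (k + 1)" if "k < n" for k
    using that by (simp add: W_def del: upt_Suc add: nth_upt)
  note idx = alternating_index_parity[OF idx_alt]
  have alt: "alternating (idx 1) W"
    unfolding alternating_iff_nth len
  proof (intro allI impI)
    fix k assume "k < n"
    then have "k + 1 \<in> {1..n}"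
      by simp
    then have "centered_letter (idx (k + 1)) (b (k + 1))"
      unfolding centered_letter_iff by (rule bspec[OF b])
    then show "centered_letter (even k = idx 1) (W ! k)"
      using idx[of "k + 1"] W_nth[of k] \<open>k < n\<close> by simp
  qed
  have "\<forall>l\<in>{1..length W}. b l = W ! (l - 1)"
    using W_nth by (auto simp: len)
  then have "inf_free_rhs (Bprod la ra) (Bphi \<phi>) (Bphi' \<Phi>) n idx b = alternating_value W"
    using inf_free_rhs_alternating[OF alt ne] idx unfolding len by blast
  then show "Bphi \<phi> (Bprod la ra (map b [1..<n + 1])) = 0 \<and>
    Bphi' \<Phi> (Bprod la ra (map b [1..<n + 1])) = inf_free_rhs (Bprod la ra) (Bphi \<phi>) (Bphi' \<Phi>) n idx b"
    unfolding W_def[symmetric] Bphi_def Bphi'_def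
    using phi_Bprod_alternating[OF alt ne] moments[OF alt ne] by simp
qed

lemma inf_free_iff_alternating:
  "inf_free (Bprod la ra) (Bphi \<phi>) (Bphi' \<Phi>) UNIV embedded \<longleftrightarrow>
    (\<forall>s W. alternating s W \<longrightarrow> W \<noteq> [] \<longrightarrow> \<Phi> (snd (Bprod la ra W)) = alternating_value W)"
  using alternating_moment_if_inf_free inf_free_if_alternating_moments by blast

text \<open>Deleting the unit end letters of a reduced word gives an alternating centered word, and
  every alternating centered word other than a single A-letter arises this way.\<close>

definition reduced_pairs :: "('f \<times> 'a) list \<Rightarrow> bool" where
  "reduced_pairs ps \<longleftrightarrow> ps \<noteq> [] \<and> set ps \<subseteq> F1 \<times> A1 \<and> (\<forall>p\<in>set (butlast ps). \<phi> (snd p) = 0) \<and>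
    (snd (last ps) = 1 \<or> \<phi> (snd (last ps)) = 0)"

definition reduced :: "'a \<Rightarrow> ('f \<times> 'a) list \<Rightarrow> bool" where
  "reduced a0 ps \<longleftrightarrow> a0 \<in> A1 \<and> (a0 = 1 \<or> \<phi> a0 = 0) \<and> reduced_pairs ps"

lemma reduced_pairs_Cons:
  "ps \<noteq> [] \<Longrightarrow> reduced_pairs ((f, a) # ps) \<longleftrightarrow> f \<in> F1 \<and> a \<in> A1 \<and> \<phi> a = 0 \<and> reduced_pairs ps"
  by (auto simp: reduced_pairs_def)

lemma reduced_pairs_single: "reduced_pairs [(f, a)] \<longleftrightarrow> f \<in> F1 \<and> a \<in> A1 \<and> (a = 1 \<or> \<phi> a = 0)"
  by (auto simp: reduced_pairs_def)

lemma alternating_reduced_pairs: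
  "reduced_pairs ps \<Longrightarrow> alternating False (removeAll Bone (pair_letters ps))"
proof (induction ps rule: pair_letters.induct)
  case (2 f a ps)
  then show ?case
    by (cases "ps = []") (auto simp: Bone_def reduced_pairs_Cons reduced_pairs_single)
qed (simp add: reduced_pairs_def)

lemma alternating_reduced:
  "reduced a0 ps \<Longrightarrow> alternating (a0 \<noteq> 1) (removeAll Bone ((a0, 0) # pair_letters ps))"
  using alternating_reduced_pairs by (auto simp: reduced_def Bone_def)

lemma reduced_pairs_of_alternating:
  "alternating False W \<Longrightarrow> W \<noteq> [] \<Longrightarrow> \<exists>ps. reduced_pairs ps \<and> W = removeAll Bone (pair_letters ps)"
proof (induction W rule: induct_list012)
  case (2 x)
  then obtain f where "f \<in> F1" "x = (0, f)"
    by auto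
  then show ?case
    using one_A1 by (intro exI[of _ "[(f, 1)]"]) (simp add: reduced_pairs_single Bone_def)
next
  case (3 x y W)
  then obtain f a where x: "f \<in> F1" "x = (0, f)" and y: "a \<in> A1" "\<phi> a = 0" "y = (a, 0)"
    and W: "alternating False W"
    by auto
  show ?case
  proof (cases "W = []")
    case True
    then show ?thesis
      using x y by (intro exI[of _ "[(f, a)]"]) (auto simp: reduced_pairs_single Bone_def)
  next
    case False
    then obtain ps where "reduced_pairs ps" "W = removeAll Bone (pair_letters ps)"
      using 3 W by blast
    then show ?thesis
      using x y by (intro exI[of _ "(f, a) # ps"]) (auto simp: reduced_pairs_Cons reduced_pairs_def Bone_def)
  qed
qed simp

lemma alternating_value_reduced:
  assumes "reduced a0 ps"
  shows "alternating_value (removeAll Bone ((a0, 0) # pair_letters ps)) = cyclic_value a0 ps"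
proof -
  obtain f a qs where ps: "ps = (f, a) # qs"
    using assms by (cases ps) (auto simp: reduced_def reduced_pairs_def)
  have a0: "a0 = 1 \<or> \<phi> a0 = 0"
    using assms by (simp add: reduced_def)
  show ?thesis
  proof (cases qs)
    case Nil
    then have "a = 1 \<or> \<phi> a = 0"
      using assms by (simp add: ps reduced_def reduced_pairs_def)
    then show ?thesis
      using a0 by (auto simp: ps Nil Bone_def cyclic_value_def)
  next
    case (Cons q qs')
    then have "\<phi> a = 0"
      using assms by (simp add: ps reduced_def reduced_pairs_def)
    moreover have "alternating_value ((0, g) # x # y # W) = 0" for g x y W
      by (cases W) auto
    ultimately show ?thesis
      using a0 by (cases q) (auto simp: ps Cons Bone_def cyclic_value_def)
  qed
qed

lemma multilinear_mixed_eq_if_inner_centered: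
  assumes G: "multilinear_mixed G" and H: "multilinear_mixed H"
    and reduced_eq: "\<And>a0 ps. reduced a0 ps \<Longrightarrow> G a0 ps = H a0 ps"
    and "a0 \<in> A1" "ps \<noteq> []" "set ps \<subseteq> F1 \<times> A1"
    and inner: "\<forall>p\<in>set (butlast ps). \<phi> (snd p) = 0"
  shows "G a0 ps = H a0 ps"
proof -
  have ends_reduced: "G b ps = H b ps" if "b \<in> A1" "b = 1 \<or> \<phi> b = 0" for b
  proof -
    obtain qs f a where ps: "ps = qs @ [(f, a)]"
      using \<open>ps \<noteq> []\<close> by (metis rev_exhaust surj_pair)
    have "reduced b (qs @ [(f, 1)])" "reduced b (qs @ [(f, center a)])"
      using that assms one_A1 center_in_A1 by (auto simp: reduced_def reduced_pairs_def ps)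
    then show ?thesis
      using multilinear_mixed_split[OF G, of b qs f a "[]"] multilinear_mixed_split[OF H, of b qs f a "[]"]
        reduced_eq by (simp add: ps)
  qed
  show ?thesis
    using assms one_A1 center_in_A1 ends_reduced[of 1] ends_reduced[of "center a0"]
      multilinear_mixed_split_first[OF G, of a0 ps] multilinear_mixed_split_first[OF H, of a0 ps]
    by simp
qed

lemma multilinear_mixed_eq_if_eq_on_reduced:
  assumes G: "multilinear_mixed G" and H: "multilinear_mixed H"
    and reduced_eq: "\<And>a0 ps. reduced a0 ps \<Longrightarrow> G a0 ps = H a0 ps"
  shows "a0 \<in> A1 \<Longrightarrow> ps \<noteq> [] \<Longrightarrow> set ps \<subseteq> F1 \<times> A1 \<Longrightarrow> G a0 ps = H a0 ps"
  \<comment> \<open>splitting a non-centered inner letter gives a merged, shorter word and a word with one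
    non-centered inner letter less\<close>
proof (induction "length ps + length (filter (\<lambda>p. \<phi> (snd p) \<noteq> 0) (butlast ps))"
    arbitrary: ps rule: less_induct)
  case less
  show ?case
  proof (cases "\<forall>p\<in>set (butlast ps). \<phi> (snd p) = 0")
    case True
    then show ?thesis
      using multilinear_mixed_eq_if_inner_centered[OF G H reduced_eq] less.prems by blast
  next
    case False
    then obtain f a where "(f, a) \<in> set (butlast ps)" "\<phi> a \<noteq> 0"
      by auto
    then obtain xs g a' ys where ps: "ps = xs @ (f, a) # (g, a') # ys"
      using in_set_butlast_split by (metis surj_pair)
    define merged where "merged = xs @ (f * g, a') # ys"
    define centered where "centered = xs @ (f, center a) # (g, a') # ys"
    have "set merged \<subseteq> F1 \<times> A1" "set centered \<subseteq> F1 \<times> A1"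
      using less.prems(3) F1_mult center_in_A1 by (auto simp: ps merged_def centered_def)
    moreover have "butlast ps = xs @ (f, a) # butlast ((g, a') # ys)"
      "butlast merged = xs @ butlast ((f * g, a') # ys)"
      "butlast centered = xs @ (f, center a) # butlast ((g, a') # ys)"
      by (simp_all add: ps merged_def centered_def butlast_append)
    then have "length (filter (\<lambda>p. \<phi> (snd p) \<noteq> 0) (butlast merged)) \<le>
        length (filter (\<lambda>p. \<phi> (snd p) \<noteq> 0) (butlast ps))"
      "length (filter (\<lambda>p. \<phi> (snd p) \<noteq> 0) (butlast centered)) <
        length (filter (\<lambda>p. \<phi> (snd p) \<noteq> 0) (butlast ps))"
      using \<open>\<phi> a \<noteq> 0\<close> by (cases ys; simp)+
    moreover have "length merged < length ps" "length centered = length ps"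
      by (simp_all add: ps merged_def centered_def)
    ultimately have "G a0 merged = H a0 merged" "G a0 centered = H a0 centered"
      using less.hyps less.prems(1) by (simp_all add: merged_def centered_def)
    then show ?thesis
      using multilinear_mixed_split[OF G, of a0 xs f a "(g, a') # ys"]
        multilinear_mixed_split[OF H, of a0 xs f a "(g, a') # ys"]
        multilinear_mixed_merge[OF G, of a0 xs f g a' ys] multilinear_mixed_merge[OF H, of a0 xs f g a' ys]
      by (simp add: ps merged_def centered_def)
  qed
qed

lemma alternating_eq_reduced:
  assumes alt: "alternating s W" and ne: "W \<noteq> []" and not_single: "\<not> (s \<and> length W = 1)"
  obtains a0 ps where "reduced a0 ps" "W = removeAll Bone ((a0, 0) # pair_letters ps)"
proof (cases s)
  case True
  then obtain a W' where W: "W = (a, 0) # W'" and a: "a \<in> A1" "\<phi> a = 0" and "alternating False W'"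
    using alt ne by (cases W) auto
  moreover have "W' \<noteq> []"
    using not_single True W by auto
  ultimately obtain ps where "reduced_pairs ps" "W' = removeAll Bone (pair_letters ps)"
    using reduced_pairs_of_alternating by blast
  moreover have "a \<noteq> 1"
    using a by auto
  ultimately show ?thesis
    using that[of a ps] W a by (simp add: reduced_def Bone_def)
next
  case False
  then have "alternating False W"
    using alt by simp
  then obtain ps where "reduced_pairs ps" "W = removeAll Bone (pair_letters ps)"
    using reduced_pairs_of_alternating ne by blast
  then show ?thesis
    using that[of 1 ps] one_A1 by (simp add: reduced_def Bone_def)
qed

lemma removeAll_Bone_reduced_ne: "reduced a0 ps \<Longrightarrow> removeAll Bone ((a0, 0) # pair_letters ps) \<noteq> []"
  by (cases ps) (auto simp: reduced_def reduced_pairs_def Bone_def)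

lemma alternating_moment_if_cyclic:
  assumes moments: "\<And>a0 ps. a0 \<in> A1 \<Longrightarrow> ps \<noteq> [] \<Longrightarrow> set ps \<subseteq> F1 \<times> A1 \<Longrightarrow>
      mixed_moment a0 ps = cyclic_value a0 ps"
    and alt: "alternating s W" and ne: "W \<noteq> []"
  shows "\<Phi> (snd (Bprod la ra W)) = alternating_value W"
proof (cases "s \<and> length W = 1")
  case True
  then obtain a where "W = [(a, 0)]"
    using alt by (auto simp: length_Suc_conv)
  then show ?thesis
    by (simp add: Bmult_def Bone_def)
next
  case False
  then obtain a0 ps where red: "reduced a0 ps" and W: "W = removeAll Bone ((a0, 0) # pair_letters ps)"
    using alternating_eq_reduced alt ne by blast
  have "\<Phi> (snd (Bprod la ra W)) = mixed_moment a0 ps"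
    by (simp only: W Bprod_removeAll_Bone mixed_moment_def)
  also have "\<dots> = cyclic_value a0 ps"
    using moments red by (simp add: reduced_def reduced_pairs_def)
  also have "\<dots> = alternating_value W"
    unfolding W by (rule alternating_value_reduced[OF red, symmetric])
  finally show ?thesis .
qed

lemma cyclic_moment_if_alternating:
  assumes moments: "\<And>s W. alternating s W \<Longrightarrow> W \<noteq> [] \<Longrightarrow> \<Phi> (snd (Bprod la ra W)) = alternating_value W"
  shows "a0 \<in> A1 \<Longrightarrow> ps \<noteq> [] \<Longrightarrow> set ps \<subseteq> F1 \<times> A1 \<Longrightarrow> mixed_moment a0 ps = cyclic_value a0 ps"
proof (rule multilinear_mixed_eq_if_eq_on_reduced[OF multilinear_mixed_moment multilinear_mixed_cyclic_value])
  fix a0 ps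
  assume red: "reduced a0 ps"
  have "mixed_moment a0 ps = \<Phi> (snd (Bprod la ra (removeAll Bone ((a0, 0) # pair_letters ps))))"
    by (simp only: mixed_moment_def Bprod_removeAll_Bone)
  also have "\<dots> = alternating_value (removeAll Bone ((a0, 0) # pair_letters ps))"
    using moments alternating_reduced[OF red] removeAll_Bone_reduced_ne[OF red] by blast
  also have "\<dots> = cyclic_value a0 ps"
    by (rule alternating_value_reduced[OF red])
  finally show "mixed_moment a0 ps = cyclic_value a0 ps" .
qed

lemma moments_iff_alternating:
  "(\<forall>a0 ps. a0 \<in> A1 \<longrightarrow> ps \<noteq> [] \<longrightarrow> set ps \<subseteq> F1 \<times> A1 \<longrightarrow> mixed_moment a0 ps = cyclic_value a0 ps) \<longleftrightarrow>
    (\<forall>s W. alternating s W \<longrightarrow> W \<noteq> [] \<longrightarrow> \<Phi> (snd (Bprod la ra W)) = alternating_value W)"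
  using alternating_moment_if_cyclic cyclic_moment_if_alternating by blast

end

theorem proposition3p1:
  fixes sA :: "complex \<Rightarrow> 'a::ring_1 \<Rightarrow> 'a"
    and \<phi> :: "'a \<Rightarrow> complex"
    and sF :: "complex \<Rightarrow> 'f::ring \<Rightarrow> 'f"
    and la :: "'a \<Rightarrow> 'f \<Rightarrow> 'f"
    and ra :: "'f \<Rightarrow> 'a \<Rightarrow> 'f"
    and \<Phi> :: "'f \<Rightarrow> complex"
    and A1 :: "'a set" and F1 :: "'f set"
  assumes "ncps_typeB' sA \<phi> sF la ra \<Phi>"
    and "subalg sA A1" and "1 \<in> A1"
    and "subalg sF F1"
  shows "cyclic_antimonotone_indep \<phi> la ra \<Phi> A1 F1 \<longleftrightarrow>
    inf_free (Bprod la ra) (Bphi \<phi>) (Bphi' \<Phi>) (UNIV :: bool set)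
      (\<lambda>i. if i then {(a, 0) | a. a \<in> A1} else {(sA c 1, f) | c f. f \<in> F1})"
proof -
  interpret ncps_B'_subalgebras sA \<phi> sF la ra \<Phi> A1 F1
    using assms by unfold_locales
  have "cyclic_antimonotone_indep \<phi> la ra \<Phi> A1 F1 \<longleftrightarrow>
      (\<forall>a0 ps. a0 \<in> A1 \<longrightarrow> ps \<noteq> [] \<longrightarrow> set ps \<subseteq> F1 \<times> A1 \<longrightarrow>
        mixed_moment a0 ps = cyclic_value a0 ps)"
    by (rule cyclic_antimonotone_indep_iff_moments)
  also have "\<dots> \<longleftrightarrow> (\<forall>s W. alternating s W \<longrightarrow> W \<noteq> [] \<longrightarrow>
      \<Phi> (snd (Bprod la ra W)) = alternating_value W)"
    by (rule moments_iff_alternating)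
  also have "\<dots> \<longleftrightarrow> inf_free (Bprod la ra) (Bphi \<phi>) (Bphi' \<Phi>) UNIV embedded"
    by (rule inf_free_iff_alternating[symmetric])
  finally show ?thesis
    unfolding embedded_def .
qed

end
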